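(* Let $f:X\to\mathcal G$ be convex and $x_0\in\operatorname{dom} f$. If $x_0$ solves the strict scalarized Stampacchia inequality $$\forall x\in X,\ \forall z^*\in C^-\setminus\{0\}:\ \varphi_{f,z^*}(x_0)=-\infty\ \text{or}\ 0\le\varphi'_{f,z^*}(x_0,x-x_0),$$ then it solves the strict set-valued Stampacchia inequality $0^+f(x_0)\supseteq f'(x_0,x-x_0)$ for all $x\in X$. If additionally the strong regularity condition holds, namely $\varphi_{f'(x,\cdot),z^*}(u)=\varphi'_{f,z^*}(x,u)$ for all $z^*\in C^-\setminus\{0\}$ and all $x,u\in X$, then the reverse implication holds as well.
   Context: $X$ real linear space, $Z$ real locally convex Hausdorff space with dual $Z^*$, $C\subseteq Z$ closed convex cone, $0\in C$, $C^-=\{z^*:z^*(c)\le0\ \forall c\in C\}$, $C^-\setminus\{0\}\ne\emptyset$. $\mathcal G=\{A\subseteq Z: A=\operatorname{cl}\operatorname{co}(A+C)\}$; $A\oplus B=\operatorname{cl}\{a+b\}$, $tA=\{ta\}$ ($t>0$), $A\ominus B=\{z:B+\{z\}\subseteq A\}$; $0^+A=\{z: A+\{z\}\subseteq A\}$ for $A\ne\emptyset$, $0^+\emptyset=\emptyset$. $f$ convex: $f(tx_1+(1-t)x_2)\supseteq tf(x_1)\oplus(1-t)f(x_2)$; $\operatorname{dom}f=\{x:f(x)\ne\emptyset\}$. $f'(x,u)=\bigcap_{t_0>0}\operatorname{cl}\operatorname{co}\bigcup_{0<t<t_0}\frac1t(f(x+tu)\ominus f(x))$. On $\overline{\mathbb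 R}$: inf-addition $\dot+$ ($(-\infty)\dot+(+\infty)=+\infty$), $r\ominus s=\inf\{t\in\mathbb R:r\le s\dot+t\}$ ($\inf\emptyset=+\infty$). $\varphi_{f,z^*}(x)=\inf\{-z^*(z):z\in f(x)\}$ ($+\infty$ if $f(x)=\emptyset$), $\varphi_{f'(x,\cdot),z^*}(u)=\inf\{-z^*(z): z\in f'(x,u)\}$, $\varphi'_{f,z^*}(x,u)=\inf_{t>0}\frac1t(\varphi_{f,z^*}(x+tu)\ominus\varphi_{f,z^*}(x))$. *)

theory Defs
  imports "HOL-Analysis.Analysis"
begin

definition lc_hausdorff_tvs :: "'b::{real_vector,topological_space} itself \<Rightarrow> bool" where
  "lc_hausdorff_tvs _ \<longleftrightarrow>
     continuous_on UNIV (\<lambda>p::'b \<times> 'b. fst p + snd p) \<and>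
     continuous_on UNIV (\<lambda>p::real \<times> 'b. fst p *\<^sub>R snd p) \<and>
     (\<forall>x y::'b. x \<noteq> y \<longrightarrow> (\<exists>U V. open U \<and> open V \<and> x \<in> U \<and> y \<in> V \<and> U \<inter> V = {})) \<and>
     (\<forall>(x::'b) U. open U \<and> x \<in> U \<longrightarrow> (\<exists>V. open V \<and> convex V \<and> x \<in> V \<and> V \<subseteq> U))"

definition topdual :: "('b::{real_vector,topological_space} \<Rightarrow> real) set" where
  "topdual = {zs. linear zs \<and> continuous_on UNIV zs}"

definition negdual :: "'b::{real_vector,topological_space} set \<Rightarrow> ('b \<Rightarrow> real) set" where
  "negdual C = {zs \<in> topdual. \<forall>c\<in>C. zs c \<le> 0}"

definition msum :: "'b::real_vector set \<Rightarrow> 'b set \<Rightarrow> 'b set" where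
  "msum A B = {a + b | a b. a \<in> A \<and> b \<in> B}"

definition cplus :: "'b::{real_vector,topological_space} set \<Rightarrow> 'b set \<Rightarrow> 'b set" where
  "cplus A B = closure (msum A B)"

definition smul :: "real \<Rightarrow> 'b::real_vector set \<Rightarrow> 'b set" where
  "smul t A = (\<lambda>a. t *\<^sub>R a) ` A"

definition iminus :: "'b::real_vector set \<Rightarrow> 'b set \<Rightarrow> 'b set" where
  "iminus A B = {z. msum B {z} \<subseteq> A}"

definition recc :: "'b::real_vector set \<Rightarrow> 'b set" where
  "recc A = (if A = {} then {} else {z. msum A {z} \<subseteq> A})"

definition Gsets :: "'b::{real_vector,topological_space} set \<Rightarrow> 'b set set" where
  "Gsets C = {A. A = closure (convex hull (msum A C))}"

definition convex_sv :: "('a::real_vector \<Rightarrow> 'b::{real_vector,topological_space} set) \<Rightarrow> bool" where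
  "convex_sv f \<longleftrightarrow> (\<forall>x1 x2 t. 0 < t \<and> t < 1 \<longrightarrow>
      cplus (smul t (f x1)) (smul (1 - t) (f x2)) \<subseteq> f (t *\<^sub>R x1 + (1 - t) *\<^sub>R x2))"

definition sv_dir_deriv :: "('a::real_vector \<Rightarrow> 'b::{real_vector,topological_space} set) \<Rightarrow> 'a \<Rightarrow> 'a \<Rightarrow> 'b set" where
  "sv_dir_deriv f x u = (\<Inter>t0\<in>{t0::real. 0 < t0}.
      closure (convex hull (\<Union>t\<in>{t. 0 < t \<and> t < t0}. smul (1 / t) (iminus (f (x + t *\<^sub>R u)) (f x)))))"

definition infadd :: "ereal \<Rightarrow> ereal \<Rightarrow> ereal" where
  "infadd r s = (if r = \<infinity> \<or> s = \<infinity> then \<infinity> else r + s)"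

definition ediff :: "ereal \<Rightarrow> ereal \<Rightarrow> ereal" where
  "ediff r s = Inf (ereal ` {t::real. r \<le> infadd s (ereal t)})"

definition phi_set :: "('b \<Rightarrow> real) \<Rightarrow> 'b set \<Rightarrow> ereal" where
  "phi_set zs A = Inf ((\<lambda>z. ereal (- zs z)) ` A)"

definition phi :: "('a \<Rightarrow> 'b set) \<Rightarrow> ('b \<Rightarrow> real) \<Rightarrow> 'a \<Rightarrow> ereal" where
  "phi f zs x = phi_set zs (f x)"

definition phi_dir_deriv :: "('a::real_vector \<Rightarrow> 'b set) \<Rightarrow> ('b \<Rightarrow> real) \<Rightarrow> 'a \<Rightarrow> 'a \<Rightarrow> ereal" where
  "phi_dir_deriv f zs x u =
     (INF t\<in>{t::real. 0 < t}. ereal (1 / t) * ediff (phi f zs (x + t *\<^sub>R u)) (phi f zs x))"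

end

theory Submission
  imports Defs
begin

(*
  If a + z lies outside the closed convex set f(x0) for some a in f(x0) and z in f'(x0, x - x0),
  a continuous linear functional z* strictly separates a + z from f(x0) (Hahn-Banach, applied to
  the Minkowski gauge of an open convex set).  Since f(x0) + C \<subseteq> f(x0), z* lies in C^- \ {0}, and
  \<phi>_{f,z*}(x0) is finite.  The scalar inequality gives 0 \<le> \<phi>'_{f,z*}(x0, x - x0) \<le> -z*(z), where
  the second inequality holds for every set-valued f, because each difference quotient of f at x0
  lies in the closed half-space {w. \<phi>'_{f,z*}(x0, x - x0) \<le> -z*(w)}; this contradicts the
  separation.  Conversely, if f'(x0, u) \<subseteq> 0^+ f(x0) and \<phi>_{f,z*}(x0) > -\<infinity>, then z*(z) \<le> 0 for
  every z in f'(x0, u), since otherwise -z* would be unbounded below along a ray in f(x0); thus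
  \<phi>_{f'(x0,\<cdot>),z*}(u) \<ge> 0, which is \<phi>'_{f,z*}(x0, u) by strong regularity.
*)

section \<open>Sublinear functionals and the Hahn-Banach theorem\<close>

definition sublinear :: "('a::real_vector \<Rightarrow> real) \<Rightarrow> bool" where
  "sublinear p \<longleftrightarrow>
     (\<forall>x y. p (x + y) \<le> p x + p y) \<and> (\<forall>c x. 0 < c \<longrightarrow> p (c *\<^sub>R x) = c * p x)"

lemma sublinearI:
  assumes "\<And>x y. p (x + y) \<le> p x + p y" and "\<And>c x. 0 < c \<Longrightarrow> p (c *\<^sub>R x) = c * p x"
  shows "sublinear p"
  using assms unfolding sublinear_def by blast

lemma sublinear_add: "sublinear p \<Longrightarrow> p (x + y) \<le> p x + p y"
  unfolding sublinear_def by blast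

lemma sublinear_scaleR: "sublinear p \<Longrightarrow> 0 < c \<Longrightarrow> p (c *\<^sub>R x) = c * p x"
  unfolding sublinear_def by blast

lemma sublinear_zero:
  assumes "sublinear p" shows "p 0 = 0"
  using sublinear_scaleR[OF assms, of 2 0] by simp

lemma sublinear_neg_le:
  assumes "sublinear p" shows "- p (- x) \<le> p x"
  using sublinear_add[OF assms, of x "- x"] sublinear_zero[OF assms] by simp

lemma sublinear_additive_imp_linear:
  assumes q: "sublinear q" and add: "\<And>x y. q x + q y \<le> q (x + y)"
  shows "linear q"
proof -
  have q_add: "q (x + y) = q x + q y" for x y
    using sublinear_add[OF q, of x y] add[of x y] by linarith
  have q_neg: "q (- x) = - q x" for x
    using q_add[of x "- x"] sublinear_zero[OF q] by simp
  have "q (r *\<^sub>R x) = r * q x" for r x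
  proof (cases r "0::real" rule: linorder_cases)
    case less
    then show ?thesis using sublinear_scaleR[OF q, of "- r" "- x"] q_neg by simp
  qed (use sublinear_scaleR[OF q] sublinear_zero[OF q] in auto)
  then show ?thesis by (intro linearI q_add) simp
qed

(* Shifting q along y gives a sublinear minorant of q which equals q only if q is additive along
   y; hence minimal sublinear functionals are linear. *)
definition sublinear_shift :: "('a::real_vector \<Rightarrow> real) \<Rightarrow> 'a \<Rightarrow> 'a \<Rightarrow> real" where
  "sublinear_shift q y x = Inf ((\<lambda>t. q (x + t *\<^sub>R y) - t * q y) ` {0<..})"

lemma sublinear_shift_le:
  assumes q: "sublinear q" and t: "0 < t"
  shows "sublinear_shift q y x \<le> q (x + t *\<^sub>R y) - t * q y"
  unfolding sublinear_shift_def
proof (rule cInf_lower)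
  show "bdd_below ((\<lambda>t. q (x + t *\<^sub>R y) - t * q y) ` {0<..})"
  proof (rule bdd_belowI2)
    fix s :: real assume "s \<in> {0<..}"
    then show "- q (- x) \<le> q (x + s *\<^sub>R y) - s * q y"
      using sublinear_add[OF q, of "x + s *\<^sub>R y" "- x"] sublinear_scaleR[OF q, of s y] by simp
  qed
qed (use t in auto)

lemma sublinear_shift_ge:
  "(\<And>t. 0 < t \<Longrightarrow> m \<le> q (x + t *\<^sub>R y) - t * q y) \<Longrightarrow> m \<le> sublinear_shift q y x"
  unfolding sublinear_shift_def by (rule cInf_greatest) auto

lemma sublinear_shift_le_self:
  assumes q: "sublinear q" shows "sublinear_shift q y x \<le> q x"
  using sublinear_shift_le[OF q, of 1 y x] sublinear_add[OF q, of x y] by simp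

lemma sublinear_sublinear_shift:
  assumes q: "sublinear q" shows "sublinear (sublinear_shift q y)"
proof (rule sublinearI)
  let ?s = "sublinear_shift q y"
  fix x1 x2
  have "?s (x1 + x2) \<le> (q (x1 + t1 *\<^sub>R y) - t1 * q y) + (q (x2 + t2 *\<^sub>R y) - t2 * q y)"
    if "0 < t1" "0 < t2" for t1 t2
  proof -
    have "?s (x1 + x2) \<le> q ((x1 + t1 *\<^sub>R y) + (x2 + t2 *\<^sub>R y)) - (t1 + t2) * q y"
      using sublinear_shift_le[OF q, of "t1 + t2" y "x1 + x2"] that by (simp add: algebra_simps)
    also have "\<dots> \<le> q (x1 + t1 *\<^sub>R y) + q (x2 + t2 *\<^sub>R y) - (t1 + t2) * q y"
      using sublinear_add[OF q] by simp
    finally show ?thesis by (simp add: algebra_simps)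
  qed
  then have "?s (x1 + x2) - (q (x2 + t2 *\<^sub>R y) - t2 * q y) \<le> ?s x1" if "0 < t2" for t2
    using that by (intro sublinear_shift_ge) (simp add: algebra_simps)
  then have "?s (x1 + x2) - ?s x1 \<le> ?s x2"
    by (intro sublinear_shift_ge) (simp add: algebra_simps)
  then show "?s (x1 + x2) \<le> ?s x1 + ?s x2" by simp
next
  let ?s = "sublinear_shift q y"
  fix c :: real and x assume c: "0 < c"
  have scaled: "q (c *\<^sub>R x + (c * t) *\<^sub>R y) - (c * t) * q y = c * (q (x + t *\<^sub>R y) - t * q y)" for t
    using sublinear_scaleR[OF q c, of "x + t *\<^sub>R y"] by (simp add: algebra_simps)
  have "?s (c *\<^sub>R x) / c \<le> ?s x"
  proof (rule sublinear_shift_ge)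
    fix t :: real assume "0 < t"
    then show "?s (c *\<^sub>R x) / c \<le> q (x + t *\<^sub>R y) - t * q y"
      using sublinear_shift_le[OF q, of "c * t" y "c *\<^sub>R x"] scaled[of t] c
      by (simp add: divide_le_eq mult.commute)
  qed
  moreover have "c * ?s x \<le> ?s (c *\<^sub>R x)"
  proof (rule sublinear_shift_ge)
    fix t :: real assume "0 < t"
    then have "c * ?s x \<le> c * (q (x + (t / c) *\<^sub>R y) - (t / c) * q y)"
      using sublinear_shift_le[OF q, of "t / c" y x] c by (simp add: mult_left_mono)
    then show "c * ?s x \<le> q (c *\<^sub>R x + t *\<^sub>R y) - t * q y"
      using scaled[of "t / c"] c by simp
  qed
  ultimately show "?s (c *\<^sub>R x) = c * ?s x" using c by (simp add: divide_le_eq mult.commute)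
qed

lemma sublinear_Inf_chain:
  assumes p: "sublinear p" and Q: "Q \<noteq> {}" "\<And>q. q \<in> Q \<Longrightarrow> sublinear q \<and> q \<le> p"
    and chain: "\<And>q1 q2. q1 \<in> Q \<Longrightarrow> q2 \<in> Q \<Longrightarrow> q1 \<le> q2 \<or> q2 \<le> q1"
  shows "sublinear (\<lambda>x. Inf ((\<lambda>q. q x) ` Q))" (is "sublinear ?m")
    and "\<forall>q\<in>Q. (\<lambda>x. Inf ((\<lambda>q. q x) ` Q)) \<le> q"
proof -
  have bdd: "bdd_below ((\<lambda>q. q x) ` Q)" for x
  proof (rule bdd_belowI2)
    fix q assume "q \<in> Q"
    then show "- p (- x) \<le> q x"
      using Q(2) sublinear_neg_le[of q x] le_funD[of q p "- x"] by fastforce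
  qed
  have le: "?m x \<le> q x" if "q \<in> Q" for q x
    using bdd that by (intro cInf_lower) auto
  then show "\<forall>q\<in>Q. ?m \<le> q" by (simp add: le_fun_def)
  have ge: "c \<le> ?m x" if "\<And>q. q \<in> Q \<Longrightarrow> c \<le> q x" for c x
    using Q(1) that by (intro cInf_greatest) auto
  show "sublinear ?m"
  proof (rule sublinearI)
    fix x y
    have "?m (x + y) - q2 y \<le> q1 x" if q12: "q1 \<in> Q" "q2 \<in> Q" for q1 q2
    proof -
      obtain q where q: "q \<in> Q" "q x \<le> q1 x" "q y \<le> q2 y"
        using chain[OF q12] q12 by (auto dest: le_funD)
      then show ?thesis
        using le[OF q(1), of "x + y"] sublinear_add[of q x y] Q(2) by fastforce
    qed
    then have "?m (x + y) - q2 y \<le> ?m x" if "q2 \<in> Q" for q2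
      using that by (intro ge)
    then have "?m (x + y) - ?m x \<le> ?m y"
      by (intro ge) (smt (verit))
    then show "?m (x + y) \<le> ?m x + ?m y" by simp
  next
    fix c :: real and x assume c: "0 < c"
    have scale: "q (c *\<^sub>R x) = c * q x" if "q \<in> Q" for q
      using Q(2)[OF that] sublinear_scaleR c by blast
    have "?m (c *\<^sub>R x) / c \<le> ?m x"
    proof (rule ge)
      fix q assume "q \<in> Q"
      then show "?m (c *\<^sub>R x) / c \<le> q x"
        using le[of q "c *\<^sub>R x"] scale[of q] c by (simp add: divide_le_eq mult.commute)
    qed
    moreover have "c * ?m x \<le> ?m (c *\<^sub>R x)"
    proof (rule ge)
      fix q assume "q \<in> Q"
      then show "c * ?m x \<le> q (c *\<^sub>R x)"
        using le[of q x] scale[of q] c by simp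
    qed
    ultimately show "?m (c *\<^sub>R x) = c * ?m x"
      using c by (simp add: divide_le_eq mult.commute)
  qed
qed

lemma sublinear_minimal_below:
  assumes p: "sublinear p"
  shows "\<exists>l. sublinear l \<and> l \<le> p \<and> (\<forall>q. sublinear q \<longrightarrow> q \<le> l \<longrightarrow> q = l)"
proof -
  define S where "S = {q. sublinear q \<and> q \<le> p}"
  have "\<exists>l\<in>S. \<forall>q\<in>S. q \<le> l \<longrightarrow> q = l"
  proof (rule predicate_Zorn)
    show "partial_order_on S (relation_of (\<lambda>q1 q2. q2 \<le> q1) S)"
      by (rule partial_order_on_relation_ofI) auto
  next
    fix Q assume Q: "Q \<in> Chains (relation_of (\<lambda>q1 q2. q2 \<le> q1) S)"
    then have QS: "\<And>q. q \<in> Q \<Longrightarrow> sublinear q \<and> q \<le> p"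
      using Chains_relation_of unfolding S_def by blast
    have chain: "q1 \<le> q2 \<or> q2 \<le> q1" if "q1 \<in> Q" "q2 \<in> Q" for q1 q2
      using Q that unfolding Chains_def relation_of_def by blast
    show "\<exists>u\<in>S. \<forall>q\<in>Q. u \<le> q"
    proof (cases "Q = {}")
      case True
      then show ?thesis using p unfolding S_def by blast
    next
      case False
      then obtain q where "q \<in> Q" by blast
      note Inf_chain = sublinear_Inf_chain[OF p False QS chain]
      then have "(\<lambda>x. Inf ((\<lambda>q. q x) ` Q)) \<in> S"
        using QS[OF \<open>q \<in> Q\<close>] order_trans[OF bspec[OF Inf_chain(2) \<open>q \<in> Q\<close>]]
        unfolding S_def by blast
      then show ?thesis using Inf_chain(2) by blast
    qed
  qed
  then obtain l where "l \<in> S" and minimal: "\<And>q. q \<in> S \<Longrightarrow> q \<le> l \<Longrightarrow> q = l" by blast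
  moreover have "q \<in> S" if "sublinear q" "q \<le> l" for q
    using that \<open>l \<in> S\<close> order_trans unfolding S_def by blast
  ultimately show ?thesis unfolding S_def by blast
qed

lemma sublinear_minimal_imp_linear:
  assumes l: "sublinear l" and minimal: "\<And>q. sublinear q \<Longrightarrow> q \<le> l \<Longrightarrow> q = l"
  shows "linear l"
proof (rule sublinear_additive_imp_linear[OF l])
  fix x y
  have "sublinear_shift l y = l"
    using sublinear_sublinear_shift[OF l] sublinear_shift_le_self[OF l]
    by (intro minimal) (auto simp: le_fun_def)
  then show "l x + l y \<le> l (x + y)" using sublinear_shift_le[OF l, of 1 y x] by simp
qed

lemma sublinear_supporting_linear:
  assumes p: "sublinear p"
  shows "\<exists>l. linear l \<and> l \<le> p \<and> l x0 = p x0"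
proof -
  let ?q = "sublinear_shift p x0"
  obtain l where l: "sublinear l" "l \<le> ?q" and minimal: "\<And>q. sublinear q \<Longrightarrow> q \<le> l \<Longrightarrow> q = l"
    using sublinear_minimal_below[OF sublinear_sublinear_shift[OF p]] by blast
  have "linear l" using sublinear_minimal_imp_linear[OF l(1)] minimal by blast
  have "l \<le> p" using l(2) sublinear_shift_le_self[OF p] by (auto simp: le_fun_def intro: order_trans)
  moreover have "p x0 \<le> l x0"
  proof -
    have "l (- x0) \<le> ?q (- x0)" using l(2) by (rule le_funD)
    also have "\<dots> \<le> - p x0" using sublinear_shift_le[OF p, of 1 x0 "- x0"] sublinear_zero[OF p] by simp
    finally show ?thesis using linear_neg[OF \<open>linear l\<close>, of x0] by simp
  qed
  ultimately show ?thesis using \<open>linear l\<close> le_funD[of l p x0] by (intro exI[of _ l]) auto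
qed

section \<open>Separation in locally convex spaces\<close>

lemma tvs_continuous_on_add:
  assumes Z: "lc_hausdorff_tvs TYPE('b::{real_vector,topological_space})"
    and f: "continuous_on S (f :: 'c::topological_space \<Rightarrow> 'b)" and g: "continuous_on S g"
  shows "continuous_on S (\<lambda>y. f y + g y)"
  using continuous_on_compose2[of UNIV "\<lambda>p::'b \<times> 'b. fst p + snd p", OF _ continuous_on_Pair[OF f g]] Z
  unfolding lc_hausdorff_tvs_def by simp

lemma tvs_continuous_on_scaleR:
  assumes Z: "lc_hausdorff_tvs TYPE('b::{real_vector,topological_space})"
    and c: "continuous_on S (c :: 'c::topological_space \<Rightarrow> real)" and f: "continuous_on S (f :: 'c \<Rightarrow> 'b)"
  shows "continuous_on S (\<lambda>y. c y *\<^sub>R f y)"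
  using continuous_on_compose2[of UNIV "\<lambda>p::real \<times> 'b. fst p *\<^sub>R snd p", OF _ continuous_on_Pair[OF c f]] Z
  unfolding lc_hausdorff_tvs_def by simp

lemma tvs_open_affine_vimage:
  assumes Z: "lc_hausdorff_tvs TYPE('b::{real_vector,topological_space})" and S: "open S"
  shows "open {y::'b. c *\<^sub>R y + v \<in> S}"
proof -
  have "continuous_on UNIV (\<lambda>y::'b. c *\<^sub>R y + v)"
    by (intro tvs_continuous_on_add[OF Z] tvs_continuous_on_scaleR[OF Z] continuous_on_const
        continuous_on_id)
  from continuous_on_open_vimage[OF open_UNIV, THEN iffD1, OF this, rule_format, OF S]
  show ?thesis by (simp add: vimage_def)
qed

lemma tvs_absorbing:
  assumes Z: "lc_hausdorff_tvs TYPE('b::{real_vector,topological_space})"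
    and S: "open S" and p: "p \<in> S"
  shows "\<exists>d>0. \<forall>s. \<bar>s\<bar> < d \<longrightarrow> p + s *\<^sub>R (x::'b) \<in> S"
proof -
  have "continuous_on UNIV (\<lambda>s::real. p + s *\<^sub>R x)"
    by (intro tvs_continuous_on_add[OF Z] tvs_continuous_on_scaleR[OF Z] continuous_on_const
        continuous_on_id)
  from continuous_on_open_vimage[OF open_UNIV, THEN iffD1, OF this, rule_format, OF S]
  have "open {s::real. p + s *\<^sub>R x \<in> S}" by (simp add: vimage_def)
  moreover have "0 \<in> {s::real. p + s *\<^sub>R x \<in> S}" using p by simp
  ultimately obtain d where "d > 0" "\<forall>s. dist s 0 < d \<longrightarrow> p + s *\<^sub>R x \<in> S"
    unfolding open_dist by blast
  then show ?thesis by (auto simp: dist_real_def)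
qed

lemma tvs_convex_closure:
  assumes Z: "lc_hausdorff_tvs TYPE('b::{real_vector,topological_space})" and K: "convex (K::'b set)"
  shows "convex (closure K)"
proof (rule convexI)
  fix x y and u v :: real
  assume xy: "x \<in> closure K" "y \<in> closure K" and uv: "0 \<le> u" "0 \<le> v" "u + v = 1"
  define g where "g = (\<lambda>p::'b \<times> 'b. u *\<^sub>R fst p + v *\<^sub>R snd p)"
  have "continuous_on UNIV g"
    unfolding g_def
    by (intro tvs_continuous_on_add[OF Z] tvs_continuous_on_scaleR[OF Z continuous_on_const]
        continuous_on_fst[OF continuous_on_id] continuous_on_snd[OF continuous_on_id])
  from continuous_on_closed_vimage[OF closed_UNIV, THEN iffD1, OF this, rule_format, OF closed_closure]
  have "closed (g -` closure K)" by simp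
  moreover have "K \<times> K \<subseteq> g -` closure K"
  proof
    fix p assume "p \<in> K \<times> K"
    then have "g p \<in> K" unfolding g_def using convexD[OF K _ _ uv] by (cases p) auto
    then show "p \<in> g -` closure K" using closure_subset by blast
  qed
  ultimately have "closure K \<times> closure K \<subseteq> g -` closure K"
    using closure_minimal[of "K \<times> K"] by (simp add: closure_Times)
  then show "u *\<^sub>R x + v *\<^sub>R y \<in> closure K" using xy unfolding g_def by auto
qed

(* The infimum is taken in the reals, so it is only meaningful for absorbing D, as assumed below. *)
definition minkowski_gauge :: "'b::real_vector set \<Rightarrow> 'b \<Rightarrow> real" where
  "minkowski_gauge D x = Inf {t. 0 < t \<and> (1 / t) *\<^sub>R x \<in> D}"

lemma minkowski_gauge_le:
  assumes "0 < t" "(1 / t) *\<^sub>R x \<in> D"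
  shows "minkowski_gauge D x \<le> t"
  unfolding minkowski_gauge_def using assms by (intro cInf_lower bdd_belowI[of _ 0]) auto

lemma minkowski_gauge_le_1: "x \<in> D \<Longrightarrow> minkowski_gauge D x \<le> 1"
  by (rule minkowski_gauge_le) auto

context
  fixes D :: "'a::real_vector set"
  assumes convex: "convex D" and zero: "0 \<in> D" and absorbing: "\<And>x. \<exists>t>0. (1 / t) *\<^sub>R x \<in> D"
begin

lemma minkowski_gauge_ge:
  assumes "\<And>t. 0 < t \<Longrightarrow> (1 / t) *\<^sub>R x \<in> D \<Longrightarrow> c \<le> t"
  shows "c \<le> minkowski_gauge D x"
  unfolding minkowski_gauge_def using absorbing[of x] assms by (intro cInf_greatest) auto

lemma minkowski_gauge_ge_1:
  assumes x: "x \<notin> D" shows "1 \<le> minkowski_gauge D x"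
proof (rule minkowski_gauge_ge)
  fix t :: real assume t: "0 < t" "(1 / t) *\<^sub>R x \<in> D"
  show "1 \<le> t"
  proof (rule ccontr)
    assume "\<not> 1 \<le> t"
    then have "t *\<^sub>R ((1 / t) *\<^sub>R x) + (1 - t) *\<^sub>R 0 \<in> D"
      using t by (intro convexD[OF convex _ zero]) auto
    then show False using x t by simp
  qed
qed

lemma sublinear_minkowski_gauge: "sublinear (minkowski_gauge D)"
proof (rule sublinearI)
  fix x y
  have "minkowski_gauge D (x + y) \<le> s + t"
    if s: "0 < s" "(1 / s) *\<^sub>R x \<in> D" and t: "0 < t" "(1 / t) *\<^sub>R y \<in> D" for s t
  proof (rule minkowski_gauge_le)
    have "(s / (s + t)) *\<^sub>R ((1 / s) *\<^sub>R x) + (t / (s + t)) *\<^sub>R ((1 / t) *\<^sub>R y) \<in> D"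
      using s t by (intro convexD[OF convex]) (auto simp: add_divide_distrib[symmetric])
    then show "(1 / (s + t)) *\<^sub>R (x + y) \<in> D"
      using s t by (simp add: scaleR_add_right)
  qed (use s t in simp)
  then have "minkowski_gauge D (x + y) - t \<le> minkowski_gauge D x"
    if "0 < t" "(1 / t) *\<^sub>R y \<in> D" for t
    using that by (intro minkowski_gauge_ge) (smt (verit))
  then have "minkowski_gauge D (x + y) - minkowski_gauge D x \<le> minkowski_gauge D y"
    by (intro minkowski_gauge_ge) (smt (verit))
  then show "minkowski_gauge D (x + y) \<le> minkowski_gauge D x + minkowski_gauge D y" by simp
next
  fix c :: real and x assume c: "0 < c"
  have "minkowski_gauge D (c *\<^sub>R x) / c \<le> minkowski_gauge D x"
  proof (rule minkowski_gauge_ge)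
    fix t :: real assume "0 < t" "(1 / t) *\<^sub>R x \<in> D"
    then have "minkowski_gauge D (c *\<^sub>R x) \<le> c * t"
      using c by (intro minkowski_gauge_le) auto
    then show "minkowski_gauge D (c *\<^sub>R x) / c \<le> t"
      using c by (simp add: divide_le_eq mult.commute)
  qed
  moreover have "c * minkowski_gauge D x \<le> minkowski_gauge D (c *\<^sub>R x)"
  proof (rule minkowski_gauge_ge)
    fix t :: real assume "0 < t" "(1 / t) *\<^sub>R (c *\<^sub>R x) \<in> D"
    then have "minkowski_gauge D x \<le> t / c"
      using c by (intro minkowski_gauge_le) auto
    then show "c * minkowski_gauge D x \<le> t"
      using c by (simp add: le_divide_eq mult.commute)
  qed
  ultimately show "minkowski_gauge D (c *\<^sub>R x) = c * minkowski_gauge D x"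
    using c by (simp add: divide_le_eq mult.commute)
qed

end

lemma tvs_continuous_on_linear_bounded_above:
  assumes Z: "lc_hausdorff_tvs TYPE('b::{real_vector,topological_space})"
    and l: "linear (l :: 'b \<Rightarrow> real)" and D: "open D" "0 \<in> D" and bound: "\<And>y. y \<in> D \<Longrightarrow> l y \<le> 1"
  shows "continuous_on UNIV l"
  unfolding continuous_on_topological
proof (intro ballI allI impI)
  fix x :: 'b and B :: "real set" assume B: "open B" "l x \<in> B"
  then obtain e where e: "e > 0" "\<And>r. dist r (l x) < e \<Longrightarrow> r \<in> B"
    unfolding open_dist by blast
  define N where "N = D \<inter> {y. (- 1) *\<^sub>R y + 0 \<in> D}"
  have "open N" unfolding N_def by (intro open_Int D tvs_open_affine_vimage[OF Z])
  have l_N: "\<bar>l y\<bar> \<le> 1" if "y \<in> N" for y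
    using that bound[of y] bound[of "- y"] linear_neg[OF l, of y] unfolding N_def by auto
  define T where "T = {y. (2 / e) *\<^sub>R y + - ((2 / e) *\<^sub>R x) \<in> N}"
  have "open T" unfolding T_def by (rule tvs_open_affine_vimage[OF Z \<open>open N\<close>])
  moreover have "x \<in> T" unfolding T_def N_def using D by simp
  moreover have "l y \<in> B" if "y \<in> T" for y
  proof -
    have "l ((2 / e) *\<^sub>R y + - ((2 / e) *\<^sub>R x)) = (2 / e) * (l y - l x)"
      using l by (simp add: linear_diff linear_scale right_diff_distrib)
    then have "\<bar>(2 / e) * (l y - l x)\<bar> \<le> 1" using l_N that unfolding T_def by fastforce
    then have "\<bar>l y - l x\<bar> \<le> e / 2" using e(1) by (auto simp: abs_if field_simps split: if_splits)
    then show ?thesis using e by (simp add: dist_real_def)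
  qed
  ultimately show "\<exists>T. open T \<and> x \<in> T \<and> (\<forall>y\<in>UNIV. y \<in> T \<longrightarrow> l y \<in> B)" by blast
qed

lemma tvs_separation_open_convex:
  assumes Z: "lc_hausdorff_tvs TYPE('b::{real_vector,topological_space})"
    and D: "open D" "convex D" "0 \<in> D" and v: "(v::'b) \<notin> D"
  shows "\<exists>l\<in>topdual. 1 \<le> l v \<and> (\<forall>x\<in>D. l x \<le> 1)"
proof -
  have absorbing: "\<exists>t>0. (1 / t) *\<^sub>R x \<in> D" for x
  proof -
    obtain d where "d > 0" "\<forall>s. \<bar>s\<bar> < d \<longrightarrow> 0 + s *\<^sub>R x \<in> D"
      using tvs_absorbing[OF Z D(1,3)] by blast
    then show ?thesis by (intro exI[of _ "2 / d"]) auto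
  qed
  obtain l where l: "linear l" "l \<le> minkowski_gauge D" "l v = minkowski_gauge D v"
    using sublinear_supporting_linear[OF sublinear_minkowski_gauge[OF D(2,3) absorbing]] by blast
  have "1 \<le> l v" using minkowski_gauge_ge_1[OF D(2,3) absorbing v] l(3) by simp
  moreover have l_D: "l x \<le> 1" if "x \<in> D" for x
    using le_funD[OF l(2), of x] minkowski_gauge_le_1[OF that] by linarith
  moreover have "continuous_on UNIV l"
    by (rule tvs_continuous_on_linear_bounded_above[OF Z l(1) D(1,3) l_D])
  ultimately show ?thesis using l(1) unfolding topdual_def by blast
qed

lemma tvs_separation_point_closed_convex:
  assumes Z: "lc_hausdorff_tvs TYPE('b::{real_vector,topological_space})"
    and A: "closed A" "convex A" and b: "b \<notin> A"
  shows "\<exists>l\<in>topdual. \<forall>a\<in>A. l a < l (b::'b)"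
proof (cases "A = {}")
  case True
  have "(\<lambda>_::'b. 0::real) \<in> topdual" by (simp add: topdual_def linear_zero)
  with True show ?thesis by blast
next
  case False
  then obtain a0 where a0: "a0 \<in> A" by blast
  have "open (- A)" "b \<in> - A" using A(1) b by (auto simp: open_Compl)
  then obtain V where V: "open V" "convex V" "b \<in> V" "V \<subseteq> - A"
    using Z unfolding lc_hausdorff_tvs_def by meson
  define e where "e = a0 - b"
  (* D = A - V - e is open and convex, contains 0 = a0 - b - e and misses -e, as V \<inter> A = {}. *)
  define D where "D = (\<lambda>k. k - e) ` (\<Union>a\<in>A. \<Union>v\<in>V. {a - v})"
  have D_iff: "x \<in> D \<longleftrightarrow> (\<exists>a\<in>A. a - e - x \<in> V)" for x
  proof
    assume "x \<in> D"
    then obtain a v where "a \<in> A" "v \<in> V" "x = a - v - e" unfolding D_def by blast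
    then show "\<exists>a\<in>A. a - e - x \<in> V" by (intro bexI[of _ a]) simp_all
  next
    assume "\<exists>a\<in>A. a - e - x \<in> V"
    then obtain a where "a \<in> A" "a - e - x \<in> V" by blast
    then have "a - (a - e - x) \<in> (\<Union>a\<in>A. \<Union>v\<in>V. {a - v})" by blast
    then show "x \<in> D" unfolding D_def by (rule image_eqI[rotated]) simp
  qed
  have "D = (\<Union>a\<in>A. {x. (- 1) *\<^sub>R x + (a - e) \<in> V})" by (auto simp: D_iff)
  then have "open D" by (simp only:) (intro open_UN ballI tvs_open_affine_vimage[OF Z V(1)])
  moreover have "convex D"
    unfolding D_def by (intro convex_translation_subtract convex_differences A(2) V(2))
  moreover have "0 \<in> D" using a0 V(3) unfolding D_iff e_def by (intro bexI[of _ a0]) simp_all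
  moreover have "- e \<notin> D" using V(4) by (auto simp: D_iff)
  ultimately obtain l where l: "l \<in> topdual" "1 \<le> l (- e)" and l_D: "\<And>x. x \<in> D \<Longrightarrow> l x \<le> 1"
    using tvs_separation_open_convex[OF Z] by blast
  have lin: "linear l" using l(1) unfolding topdual_def by blast
  have l_e: "l e \<le> -1" using l(2) linear_neg[OF lin, of e] by simp
  obtain d where d: "d > 0" "\<forall>s. \<bar>s\<bar> < d \<longrightarrow> b + s *\<^sub>R e \<in> V"
    using tvs_absorbing[OF Z V(1,3)] by blast
  have "l a < l b" if "a \<in> A" for a
  proof -
    have "(d / 2) *\<^sub>R e + b \<in> V" using d by (simp add: add.commute)
    then have "a - e - (b + (d / 2) *\<^sub>R e) \<in> D"
      unfolding D_iff using that by (intro bexI[of _ a]) simp_all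
    then have "l (a - e - (b + (d / 2) *\<^sub>R e)) \<le> 1" by (rule l_D)
    moreover have "l (a - e - (b + (d / 2) *\<^sub>R e)) = l a - l e - (l b + (d / 2) * l e)"
      using lin by (simp add: linear_diff linear_add linear_scale)
    moreover have "(d / 2) * l e \<le> (d / 2) * -1"
      using l_e d(1) by (intro mult_left_mono) auto
    ultimately show ?thesis using l_e d(1) by linarith
  qed
  with \<open>l \<in> topdual\<close> show ?thesis by blast
qed

section \<open>Recession cones and scalarization\<close>

lemma recc_add_multiple:
  assumes z: "z \<in> recc A" and a: "a \<in> A"
  shows "a + real n *\<^sub>R z \<in> A"
proof (induction n)
  case (Suc n)
  have "(a + real n *\<^sub>R z) + z \<in> msum A {z}" using Suc unfolding msum_def by blast
  also have "msum A {z} \<subseteq> A" using z a unfolding recc_def by (cases "A = {}") auto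
  finally show ?case by (simp add: algebra_simps)
qed (use a in simp)

lemma linear_nonpos_of_bounded_ray:
  assumes l: "linear (l :: 'b::real_vector \<Rightarrow> real)" and bound: "\<And>n::nat. l (a + real n *\<^sub>R z) \<le> M"
  shows "l z \<le> 0"
proof (rule ccontr)
  assume "\<not> l z \<le> 0"
  moreover obtain n where "(M - l a) / l z < real n" using reals_Archimedean2 by blast
  ultimately have "M < l a + real n * l z" by (simp add: divide_less_eq algebra_simps)
  then show False using bound[of n] l by (simp add: linear_add linear_scale)
qed

lemma Gsets_eq: "A \<in> Gsets C \<Longrightarrow> A = closure (convex hull (msum A C))"
  unfolding Gsets_def by (rule CollectD)

lemma Gsets_add_cone:
  assumes A: "A \<in> Gsets C" and "a \<in> A" "c \<in> C"
  shows "a + c \<in> A"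
proof -
  have "a + c \<in> msum A C" using assms(2,3) unfolding msum_def by blast
  also have "msum A C \<subseteq> closure (convex hull (msum A C))"
    by (rule order_trans[OF hull_subset closure_subset])
  also have "\<dots> = A" by (rule Gsets_eq[OF A, symmetric])
  finally show ?thesis .
qed

lemma Gsets_closed:
  assumes "A \<in> Gsets C" shows "closed A"
  by (subst Gsets_eq[OF assms]) (rule closed_closure)

lemma tvs_Gsets_convex:
  assumes Z: "lc_hausdorff_tvs TYPE('b::{real_vector,topological_space})" and A: "A \<in> Gsets (C::'b set)"
  shows "convex A"
  by (subst Gsets_eq[OF A]) (rule tvs_convex_closure[OF Z convex_convex_hull])

lemma Gsets_bounded_above_negdual:
  assumes A: "A \<in> Gsets C" "a \<in> A" and C: "cone C"
    and l: "l \<in> topdual" and bound: "\<And>a'. a' \<in> A \<Longrightarrow> l a' \<le> M"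
  shows "l \<in> negdual C"
proof -
  have "l c \<le> 0" if "c \<in> C" for c
  proof -
    have "real n *\<^sub>R c \<in> C" for n using C that unfolding cone_def by simp
    then have "l (a + real n *\<^sub>R c) \<le> M" for n using Gsets_add_cone[OF A] bound by blast
    moreover have "linear l" using l unfolding topdual_def by blast
    ultimately show ?thesis using linear_nonpos_of_bounded_ray by blast
  qed
  then show ?thesis using l unfolding negdual_def by blast
qed

lemma phi_set_le: "a \<in> A \<Longrightarrow> phi_set l A \<le> ereal (- l a)"
  unfolding phi_set_def by (rule Inf_lower) simp

lemma phi_set_ge: "(\<And>a. a \<in> A \<Longrightarrow> m \<le> ereal (- l a)) \<Longrightarrow> m \<le> phi_set l A"
  unfolding phi_set_def by (rule Inf_greatest) auto

lemma phi_set_nonneg_if_subset_recc: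
  assumes l: "linear l" and A: "a \<in> A" "phi_set l A \<noteq> - \<infinity>" and S: "S \<subseteq> recc A"
  shows "0 \<le> phi_set l S"
proof (rule phi_set_ge)
  fix z assume "z \<in> S"
  obtain r where r: "phi_set l A = ereal r"
    using A phi_set_le[OF A(1), of l] by (cases "phi_set l A") auto
  have ray: "a + real n *\<^sub>R z \<in> A" for n
    using recc_add_multiple[OF _ A(1)] \<open>z \<in> S\<close> S by blast
  have "l (a + real n *\<^sub>R z) \<le> - r" for n
    using phi_set_le[OF ray, of l n] r by simp
  then have "l z \<le> 0" by (rule linear_nonpos_of_bounded_ray[OF l])
  then show "0 \<le> ereal (- l z)" by simp
qed

lemma phi_dir_deriv_le_quotient:
  assumes l: "linear l" and finite: "\<bar>phi f l x\<bar> \<noteq> \<infinity>" and t: "0 < t"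
    and y: "y \<in> iminus (f (x + t *\<^sub>R u)) (f x)"
  shows "phi_dir_deriv f l x u \<le> ereal (- l ((1 / t) *\<^sub>R y))"
proof -
  obtain r where r: "phi f l x = ereal r" using finite by (cases "phi f l x") auto
  define \<psi> where "\<psi> = phi f l (x + t *\<^sub>R u)"
  have "\<psi> + ereal (l y) \<le> ereal (- l a)" if "a \<in> f x" for a
  proof -
    have "a + y \<in> f (x + t *\<^sub>R u)" using y that unfolding iminus_def msum_def by blast
    from phi_set_le[OF this, of l] have "\<psi> \<le> ereal (- l a - l y)"
      using linear_add[OF l, of a y] unfolding \<psi>_def phi_def by simp
    then show ?thesis by (cases \<psi>) auto
  qed
  then have "\<psi> + ereal (l y) \<le> phi f l x" unfolding phi_def by (rule phi_set_ge)
  then have "\<psi> \<le> infadd (ereal r) (ereal (- l y))" unfolding r by (cases \<psi>) (auto simp: infadd_def)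
  then have "ediff \<psi> (phi f l x) \<le> ereal (- l y)"
    unfolding ediff_def r by (intro Inf_lower image_eqI[of _ _ "- l y"]) simp_all
  then have "ereal (1 / t) * ediff \<psi> (phi f l x) \<le> ereal (1 / t) * ereal (- l y)"
    using t by (intro ereal_mult_left_mono) auto
  moreover have "phi_dir_deriv f l x u \<le> ereal (1 / t) * ediff \<psi> (phi f l x)"
    unfolding phi_dir_deriv_def \<psi>_def using t by (intro INF_lower) simp
  ultimately show ?thesis using linear_scale[OF l] by simp
qed

lemma topdual_le_on_closure_convex_hull:
  assumes l: "l \<in> topdual" and U: "\<And>w. w \<in> U \<Longrightarrow> l w \<le> c" and z: "z \<in> closure (convex hull U)"
  shows "l z \<le> c"
proof -
  have "continuous_on UNIV l" "linear l" using l unfolding topdual_def by auto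
  from continuous_on_closed_vimage[OF closed_UNIV, THEN iffD1, OF this(1), rule_format, OF closed_atMost]
  have "closed (l -` {..c})" by simp
  moreover have "convex (l -` {..c})" by (rule convex_linear_vimage[OF \<open>linear l\<close>]) simp
  ultimately have "closure (convex hull U) \<subseteq> l -` {..c}"
    using U by (intro closure_minimal hull_minimal) auto
  then show ?thesis using z by auto
qed

lemma phi_dir_deriv_le_phi_set_sv_dir_deriv:
  assumes l: "l \<in> topdual" and finite: "\<bar>phi f l x\<bar> \<noteq> \<infinity>"
  shows "phi_dir_deriv f l x u \<le> phi_set l (sv_dir_deriv f x u)"
proof (rule phi_set_ge)
  fix z assume z: "z \<in> sv_dir_deriv f x u"
  show "phi_dir_deriv f l x u \<le> ereal (- l z)"
  proof (rule ccontr)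
    assume "\<not> ?thesis"
    then obtain c where c: "ereal (- l z) < ereal c" "ereal c < phi_dir_deriv f l x u"
      using ereal_dense2 by (meson not_le)
    have lin: "linear l" using l unfolding topdual_def by blast
    have "l w \<le> - c"
      if w_mem: "w \<in> (\<Union>t\<in>{t. 0 < t \<and> t < 1}. smul (1 / t) (iminus (f (x + t *\<^sub>R u)) (f x)))" for w
    proof -
      obtain t y where t: "0 < t" and y: "y \<in> iminus (f (x + t *\<^sub>R u)) (f x)" and w: "w = (1 / t) *\<^sub>R y"
        using w_mem unfolding smul_def by blast
      have "ereal c < ereal (- l w)"
        using c(2) phi_dir_deriv_le_quotient[OF lin finite t y] unfolding w by order
      then show ?thesis by simp
    qed
    moreover have "z \<in> closure (convex hull
        (\<Union>t\<in>{t. 0 < t \<and> t < 1}. smul (1 / t) (iminus (f (x + t *\<^sub>R u)) (f x))))"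
      using z unfolding sv_dir_deriv_def by (rule INT_D) simp
    ultimately have "l z \<le> - c" by (rule topdual_le_on_closure_convex_hull[OF l])
    then show False using c(1) by simp
  qed
qed

lemma sv_dir_deriv_subset_recc:
  assumes Z: "lc_hausdorff_tvs TYPE('b::{real_vector,topological_space})"
    and C: "cone (C::'b set)" and A: "f x \<in> Gsets C" "f x \<noteq> {}"
    and scalar: "\<forall>l \<in> negdual C - {(\<lambda>_. 0)}. phi f l x = - \<infinity> \<or> 0 \<le> phi_dir_deriv f l x u"
  shows "sv_dir_deriv f x u \<subseteq> recc (f x)"
proof
  fix z assume z: "z \<in> sv_dir_deriv f x u"
  have "a + z \<in> f x" if a: "a \<in> f x" for a
  proof (rule ccontr)
    assume "a + z \<notin> f x"
    then obtain l where l: "l \<in> topdual" and sep: "\<And>a'. a' \<in> f x \<Longrightarrow> l a' < l (a + z)"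
      using tvs_separation_point_closed_convex[OF Z Gsets_closed[OF A(1)] tvs_Gsets_convex[OF Z A(1)]]
      by blast
    have "l \<in> negdual C"
      using Gsets_bounded_above_negdual[OF A(1) a C l] sep less_imp_le by blast
    moreover have "l \<noteq> (\<lambda>_. 0)" using sep[OF a] by auto
    moreover have finite: "\<bar>phi f l x\<bar> \<noteq> \<infinity>"
    proof -
      have "ereal (- l (a + z)) \<le> phi f l x"
        unfolding phi_def using sep by (intro phi_set_ge) (simp add: less_imp_le)
      moreover have "phi f l x \<le> ereal (- l a)" unfolding phi_def by (rule phi_set_le[OF a])
      ultimately show ?thesis by (cases "phi f l x") auto
    qed
    moreover have "phi f l x \<noteq> - \<infinity>" using finite by auto
    ultimately have "0 \<le> phi_dir_deriv f l x u" using scalar by blast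
    also have "\<dots> \<le> ereal (- l z)"
      using phi_dir_deriv_le_phi_set_sv_dir_deriv[OF l finite] phi_set_le[OF z] by (rule order_trans)
    finally have "l z \<le> 0" by simp
    moreover have "l (a + z) = l a + l z" using l unfolding topdual_def by (simp add: linear_add)
    ultimately show False using sep[OF a] by simp
  qed
  then show "z \<in> recc (f x)" using A(2) unfolding recc_def msum_def by auto
qed

theorem mainTheorem10:
  fixes f :: "'a::real_vector \<Rightarrow> 'b::{real_vector,topological_space} set"
    and C :: "'b set"
    and x0 :: 'a
  assumes Z: "lc_hausdorff_tvs TYPE('b)"
    and C_closed: "closed C" and C_convex: "convex C" and C_cone: "cone C" and C0: "0 \<in> C"
    and Cneg: "negdual C - {(\<lambda>_. 0)} \<noteq> {}"
    and fG: "\<forall>x. f x \<in> Gsets C"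
    and fconv: "convex_sv f"
    and x0dom: "f x0 \<noteq> {}"
  shows "((\<forall>x. \<forall>zs \<in> negdual C - {(\<lambda>_. 0)}.
             phi f zs x0 = - \<infinity> \<or> 0 \<le> phi_dir_deriv f zs x0 (x - x0))
          \<longrightarrow> (\<forall>x. sv_dir_deriv f x0 (x - x0) \<subseteq> recc (f x0)))
       \<and> ((\<forall>zs \<in> negdual C - {(\<lambda>_. 0)}. \<forall>x u.
             phi_set zs (sv_dir_deriv f x u) = phi_dir_deriv f zs x u)
          \<longrightarrow> (\<forall>x. sv_dir_deriv f x0 (x - x0) \<subseteq> recc (f x0))
          \<longrightarrow> (\<forall>x. \<forall>zs \<in> negdual C - {(\<lambda>_. 0)}.
                 phi f zs x0 = - \<infinity> \<or> 0 \<le> phi_dir_deriv f zs x0 (x - x0)))"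
proof (intro conjI impI allI ballI)
  fix x
  assume "\<forall>x. \<forall>zs \<in> negdual C - {(\<lambda>_. 0)}.
    phi f zs x0 = - \<infinity> \<or> 0 \<le> phi_dir_deriv f zs x0 (x - x0)"
  then show "sv_dir_deriv f x0 (x - x0) \<subseteq> recc (f x0)"
    using sv_dir_deriv_subset_recc[where f=f and x=x0, OF Z C_cone fG[rule_format] x0dom] by blast
next
  fix x l
  assume regular: "\<forall>zs \<in> negdual C - {(\<lambda>_. 0)}. \<forall>x u.
      phi_set zs (sv_dir_deriv f x u) = phi_dir_deriv f zs x u"
    and incl: "\<forall>x. sv_dir_deriv f x0 (x - x0) \<subseteq> recc (f x0)"
    and l: "l \<in> negdual C - {(\<lambda>_. 0)}"
  obtain a where a: "a \<in> f x0" using x0dom by blast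
  have "0 \<le> phi_dir_deriv f l x0 (x - x0)" if "phi f l x0 \<noteq> - \<infinity>"
  proof -
    have "linear l" using l unfolding negdual_def topdual_def by blast
    then have "0 \<le> phi_set l (sv_dir_deriv f x0 (x - x0))"
      using phi_set_nonneg_if_subset_recc[OF _ a _ incl[rule_format]] that unfolding phi_def by blast
    then show ?thesis using regular l by simp
  qed
  then show "phi f l x0 = - \<infinity> \<or> 0 \<le> phi_dir_deriv f l x0 (x - x0)" by blast
qed

end
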